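(* Let $J\ge5$ be an integer and let $n$ be an integer with $n\not\equiv0\pmod{2^{J-1}}$. Then $n=a+b$ for some integers $a,b$ with $a\equiv2^i\pmod{2^{i+2}}$ and $b\equiv2^j\pmod{2^{j+2}}$ for some integers $0\le i,j\le J-3$. *)

theory Defs
  imports "HOL-Number_Theory.Cong"
begin

end

theory Submission
  imports Defs "HOL-Computational_Algebra.Primes"
begin

text \<open>
  Write \<open>n = 2^k * m\<close> with \<open>m\<close> odd; the hypothesis forces \<open>k \<le> J - 2\<close>.
  If \<open>k = l + 1\<close>, then \<open>n = 2^l + 2^l (2m - 1)\<close> and both summands are
  \<open>2^l\<close> modulo \<open>2^(l+2)\<close>. If \<open>n\<close> is odd, split off \<open>2\<close> or \<open>4\<close> according
  to \<open>n mod 4\<close>, leaving a summand that is \<open>1\<close> modulo \<open>4\<close>; this is where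
  \<open>J \<ge> 5\<close> is needed, since \<open>4 = 2^2\<close> requires \<open>2 \<le> J - 3\<close>.
\<close>

lemma pow2_mult_odd_cong:
  fixes m :: int
  assumes "odd m"
  shows "[2 ^ l * (2 * m - 1) = 2 ^ l] (mod 2 ^ (l + 2))"
proof -
  obtain t where "m = 2 * t + 1"
    using assms by (metis oddE)
  then have "2 ^ l * (2 * m - 1) - 2 ^ l = (2::int) ^ (l + 2) * t"
    by (simp add: algebra_simps power_add)
  then show ?thesis
    by (metis cong_iff_dvd_diff dvd_triv_left)
qed

lemma odd_eq_sum_pow2_residues:
  fixes n :: int
  assumes "odd n"
  obtains a b :: int and j :: nat
  where "n = a + b" "j \<in> {1, 2}" "[a = 1] (mod 4)" "[b = 2 ^ j] (mod 2 ^ (j + 2))"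
proof (cases "n mod 4 = 1")
  case True
  then have "[n - 4 = 1] (mod 4)"
    by (simp add: cong_def mod_diff_eq[symmetric])
  moreover have "[4 = (2::int) ^ 2] (mod 2 ^ (2 + 2))"
    by (simp add: cong_def)
  ultimately show ?thesis
    using that[of "n - 4" 4 2] by simp
next
  case False
  with assms have "n mod 4 = 3"
    by presburger
  then have "[n - 2 = 1] (mod 4)"
    by (simp add: cong_def) presburger
  moreover have "[2 = (2::int) ^ 1] (mod 2 ^ (1 + 2))"
    by (simp add: cong_def)
  ultimately show ?thesis
    using that[of "n - 2" 2 1] by simp
qed

lemma pow2_exponent_less_if_not_cong_0:
  fixes n m :: int
  assumes "\<not> [n = 0] (mod 2 ^ N)" and "n = 2 ^ k * m"
  shows "k < N"
proof (rule ccontr)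
  assume "\<not> k < N"
  then have "(2::int) ^ N dvd 2 ^ k"
    by (simp add: le_imp_power_dvd)
  then show False
    using assms by (simp add: cong_0_iff)
qed

theorem lemma1:
  fixes J :: nat and n :: int
  assumes "J \<ge> 5"
    and "\<not> [n = 0] (mod (2 ^ (J - 1)))"
  shows "\<exists>a b :: int. \<exists>i j :: nat. n = a + b \<and> i \<le> J - 3 \<and> j \<le> J - 3
           \<and> [a = 2 ^ i] (mod (2 ^ (i + 2))) \<and> [b = 2 ^ j] (mod (2 ^ (j + 2)))"
proof -
  have "n \<noteq> 0"
    using assms(2) by auto
  moreover have "\<not> is_unit (2::int)"
    by simp
  ultimately obtain k m where n: "n = 2 ^ k * m" and "odd m"
    by (metis multiplicity_decompose')
  have "k < J - 1"
    using pow2_exponent_less_if_not_cong_0[OF assms(2) n] .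
  show ?thesis
  proof (cases k)
    case 0
    with n \<open>odd m\<close> have "odd n"
      by simp
    then obtain a b j where "n = a + b" "j \<in> {1, 2}" "[a = 1] (mod 4)"
        "[b = 2 ^ j] (mod 2 ^ (j + 2))"
      by (rule odd_eq_sum_pow2_residues)
    then show ?thesis
      using assms(1) by (intro exI[of _ a] exI[of _ b] exI[of _ 0] exI[of _ j]) auto
  next
    case (Suc l)
    with n have "n = 2 ^ l + 2 ^ l * (2 * m - 1)"
      by (simp add: algebra_simps)
    moreover have "l \<le> J - 3"
      using \<open>k < J - 1\<close> Suc by simp
    ultimately show ?thesis
      using pow2_mult_odd_cong[OF \<open>odd m\<close>, of l]
      by (intro exI[of _ "2 ^ l"] exI[of _ "2 ^ l * (2 * m - 1)"] exI[of _ l]) auto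
  qed
qed

end
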